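(* For all integers $n\ge0$: \begin{align*} pl_4(4n+1)&\equiv pl_4(4n+2)+pl_4(4n+3)\pmod 4,\\ pl_4(4n+3)&\equiv 0\pmod 2,\\ pl_8(8n+5)\equiv pl_8(8n+6)&\equiv pl_8(8n+7)\equiv 0\pmod 2. \end{align*}
   Context: For a positive integer $k$, $pl_k(n)$ denotes the number of $k$-component plane partitions of $n$ (plane partitions of $n$ all of whose entries are $\le k$), with $pl_k(0)=1$ and $pl_k(n)=0$ for $n<0$; equivalently $\sum_{n\ge0}pl_k(n)q^n=\prod_{n=1}^{\infty}(1-q^n)^{-\min(k,n)}$. *)

theory Defs
  imports "HOL-Computational_Algebra.Formal_Power_Series" "HOL-Number_Theory.Cong"
begin

text \<open>geo m = 1/(1 - q^m) = sum_{j>=0} q^(m j), as an integer power series (m >= 1).\<close>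
definition geo :: "nat \<Rightarrow> int fps" where
  "geo m = Abs_fps (\<lambda>i. if m dvd i then 1 else 0)"

text \<open>The generating function prod_{m>=1} (1-q^m)^{-min(k,m)}, truncated to the
  factors m <= N. Its coefficients of q^n for n <= N agree with those of the
  full infinite product, since the omitted factors are 1 + O(q^(N+1)).\<close>
definition pl_gf :: "nat \<Rightarrow> nat \<Rightarrow> int fps" where
  "pl_gf k N = (\<Prod>m\<in>{1..N}. geo m ^ min k m)"

definition pl :: "nat \<Rightarrow> int \<Rightarrow> int" where
  "pl k n = (if n < 0 then 0 else fps_nth (pl_gf k (nat n)) (nat n))"


end

theory Submission
  imports Defs "HOL-Computational_Algebra.Polynomial_FPS"
begin

text \<open>
  Split the generating function as \<open>P\<^sub>k(q) \<cdot> \<Prod>\<^sub>m (1 - q\<^sup>m)\<^sup>-\<^sup>k\<close> with the polynomial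
  \<open>P\<^sub>k(q) = \<Prod>\<^sub>m\<^sub><\<^sub>k (1 - q\<^sup>m)\<^sup>k\<^sup>-\<^sup>m\<close>. Since \<open>(1 - y)\<^sup>2 \<equiv> 1 - y\<^sup>2\<close> (mod 2) and
  \<open>(1 - y)\<^sup>4 \<equiv> (1 - y\<^sup>2)\<^sup>2\<close> (mod 4), the infinite product is congruent modulo 2 to a
  series in \<open>q\<^sup>k\<close> (for \<open>k = 4, 8\<close>), and for \<open>k = 4\<close> modulo 4 to a series in \<open>q\<^sup>2\<close>.
  Hence the coefficients of \<open>pl\<^sub>k\<close> in a fixed residue class are governed by those of
  \<open>P\<^sub>k\<close> in that class: all coefficients of \<open>P\<^sub>8\<close> at exponents \<open>\<equiv> 5, 6, 7\<close> (mod 8)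
  are even, and \<open>P\<^sub>4 \<equiv> (1 + q + q\<^sup>2)(1 + q\<^sup>4)\<^sup>2\<close> (mod 4). Both facts about the two
  explicit polynomials are checked by computation.
\<close>

unbundle fps_syntax

definition fps_cong :: "int \<Rightarrow> int fps \<Rightarrow> int fps \<Rightarrow> bool" where
  "fps_cong d f g \<longleftrightarrow> (\<forall>i. [f $ i = g $ i] (mod d))"

lemma fps_cong_refl: "fps_cong d f f"
  by (simp add: fps_cong_def)

lemma fps_cong_sym: "fps_cong d f g \<Longrightarrow> fps_cong d g f"
  by (simp add: fps_cong_def cong_sym)

lemma fps_cong_trans [trans]: "fps_cong d f g \<Longrightarrow> fps_cong d g h \<Longrightarrow> fps_cong d f h"
  unfolding fps_cong_def using cong_trans by blast

lemma fps_cong_mult: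
  "fps_cong d f f' \<Longrightarrow> fps_cong d g g' \<Longrightarrow> fps_cong d (f * g) (f' * g')"
  unfolding fps_cong_def fps_mult_nth by (intro allI cong_sum cong_mult) auto

lemma fps_cong_power: "fps_cong d f g \<Longrightarrow> fps_cong d (f ^ n) (g ^ n)"
  by (induction n) (auto intro: fps_cong_mult fps_cong_refl)

lemma fps_cong_prod:
  "(\<And>x. x \<in> A \<Longrightarrow> fps_cong d (f x) (g x)) \<Longrightarrow> fps_cong d (\<Prod>x\<in>A. f x) (\<Prod>x\<in>A. g x)"
  by (induction A rule: infinite_finite_induct) (auto intro: fps_cong_mult fps_cong_refl)

lemma fps_cong_if_diff_eq_multiple: "f - g = numeral d * h \<Longrightarrow> fps_cong (numeral d) f g"
  unfolding fps_cong_def cong_iff_dvd_diff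
  by (metis dvd_triv_left numeral_fps_const fps_mult_left_const_nth fps_sub_nth)

lemma fps_cong_inverses:
  assumes "fps_cong d (a * u) 1" and "fps_cong d (b * v) 1" and "fps_cong d u v"
  shows "fps_cong d a b"
proof -
  have "fps_cong d (a * 1) (a * (b * v))"
    by (rule fps_cong_mult[OF fps_cong_refl fps_cong_sym[OF assms(2)]])
  also have "fps_cong d \<dots> (b * (a * u))"
    using fps_cong_mult[OF fps_cong_refl fps_cong_mult[OF fps_cong_refl fps_cong_sym[OF assms(3)]]]
    by (simp add: ac_simps)
  also have "fps_cong d \<dots> (b * 1)"
    by (rule fps_cong_mult[OF fps_cong_refl assms(1)])
  finally show ?thesis by simp
qed

definition supported_on_multiples :: "nat \<Rightarrow> 'a :: comm_semiring_1 fps \<Rightarrow> bool" where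
  "supported_on_multiples d f \<longleftrightarrow> (\<forall>i. \<not> d dvd i \<longrightarrow> f $ i = 0)"

lemma supported_on_multiples_1: "supported_on_multiples d (1 :: 'a :: comm_semiring_1 fps)"
  by (simp add: supported_on_multiples_def)

lemma supported_on_multiples_mult:
  assumes "supported_on_multiples d f" and "supported_on_multiples d g"
  shows "supported_on_multiples d (f * g)"
  unfolding supported_on_multiples_def
proof (intro allI impI)
  fix n assume n: "\<not> d dvd n"
  have "f $ i * g $ (n - i) = 0" if "i \<le> n" for i
  proof -
    have "\<not> d dvd i \<or> \<not> d dvd (n - i)"
      using n that by (metis dvd_add le_add_diff_inverse)
    then show ?thesis using assms unfolding supported_on_multiples_def by auto
  qed
  then show "(f * g) $ n = 0" unfolding fps_mult_nth by (intro sum.neutral) simp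
qed

lemma supported_on_multiples_power:
  "supported_on_multiples d f \<Longrightarrow> supported_on_multiples d (f ^ n)"
  by (induction n) (auto intro: supported_on_multiples_mult supported_on_multiples_1)

lemma supported_on_multiples_prod:
  "(\<And>x. x \<in> A \<Longrightarrow> supported_on_multiples d (f x)) \<Longrightarrow> supported_on_multiples d (\<Prod>x\<in>A. f x)"
  by (induction A rule: infinite_finite_induct)
     (auto intro: supported_on_multiples_mult supported_on_multiples_1)

lemma supported_on_multiples_geo: "supported_on_multiples d (geo (d * m))"
  unfolding supported_on_multiples_def geo_def by auto

lemma supported_on_multiples_1_plus_X_power: "supported_on_multiples d (1 + fps_X ^ d)"
  unfolding supported_on_multiples_def by auto

lemma coeff_mult_cong_0_if_supported:
  assumes "fps_cong p g h" and "supported_on_multiples d h"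
    and "\<And>j. [j = i] (mod d) \<Longrightarrow> [f $ j = 0] (mod p)"
  shows "[(f * g) $ i = 0] (mod p)"
proof -
  have "[(f * g) $ i = (f * h) $ i] (mod p)"
    using fps_cong_mult[OF fps_cong_refl assms(1)] unfolding fps_cong_def by blast
  moreover have "[f $ j * h $ (i - j) = 0] (mod p)" if "j \<le> i" for j
  proof (cases "d dvd (i - j)")
    case True
    then have "[j = i] (mod d)"
      using that by (simp add: cong_altdef_nat cong_sym_eq)
    then show ?thesis using assms(3) cong_scalar_right by fastforce
  next
    case False
    then show ?thesis using assms(2) unfolding supported_on_multiples_def by simp
  qed
  then have "[(f * h) $ i = (\<Sum>j = 0..i. 0)] (mod p)"
    unfolding fps_mult_nth by (intro cong_sum) simp
  ultimately show ?thesis by (simp add: cong_trans)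
qed

lemma geo_mult_one_minus_X_power:
  assumes "m \<ge> 1"
  shows "geo m * (1 - fps_X ^ m) = 1"
proof (rule fps_ext)
  fix n
  have "geo m * (1 - fps_X ^ m) = geo m - fps_X ^ m * geo m" by (simp add: algebra_simps)
  then have "(geo m * (1 - fps_X ^ m)) $ n = geo m $ n - (if n < m then 0 else geo m $ (n - m))"
    by (simp add: fps_X_power_mult_nth)
  also have "\<dots> = (1 :: int fps) $ n"
  proof (cases "n < m")
    case True
    then have "m dvd n \<longleftrightarrow> n = 0" using assms by (auto dest: dvd_imp_le)
    then show ?thesis using True by (simp add: geo_def)
  next
    case False
    then show ?thesis using assms by (simp add: geo_def dvd_minus_self)
  qed
  finally show "(geo m * (1 - fps_X ^ m)) $ n = (1 :: int fps) $ n" .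
qed

lemma geo_power_mult_one_minus_X_power:
  "m \<ge> 1 \<Longrightarrow> geo m ^ e * (1 - fps_X ^ m) ^ e = 1"
  by (simp add: power_mult_distrib[symmetric] geo_mult_one_minus_X_power)

lemma geo_square_cong: "m \<ge> 1 \<Longrightarrow> fps_cong 2 (geo m ^ 2) (geo (2 * m))"
proof (rule fps_cong_inverses[where u = "(1 - fps_X ^ m) ^ 2" and v = "1 - fps_X ^ (2 * m)"])
  assume m: "m \<ge> 1"
  show "fps_cong 2 (geo m ^ 2 * (1 - fps_X ^ m) ^ 2) 1"
    using geo_power_mult_one_minus_X_power[OF m] by (simp add: fps_cong_refl)
  show "fps_cong 2 (geo (2 * m) * (1 - fps_X ^ (2 * m))) 1"
    using geo_mult_one_minus_X_power[of "2 * m"] m by (simp add: fps_cong_refl)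
  have diff: "(1 - y) ^ 2 - (1 - y ^ 2) = 2 * (y ^ 2 - y)" for y :: "int fps" by algebra
  have X_power: "(fps_X :: int fps) ^ (2 * m) = (fps_X ^ m) ^ 2"
    by (simp add: power_mult mult.commute)
  show "fps_cong 2 ((1 - fps_X ^ m) ^ 2) (1 - fps_X ^ (2 * m))"
    unfolding X_power by (rule fps_cong_if_diff_eq_multiple[OF diff])
qed

lemma geo_power_two_pow_cong: "m \<ge> 1 \<Longrightarrow> fps_cong 2 (geo m ^ 2 ^ e) (geo (2 ^ e * m))"
proof (induction e)
  case 0
  show ?case by (simp add: fps_cong_refl)
next
  case (Suc e)
  have "fps_cong 2 ((geo m ^ 2 ^ e) ^ 2) (geo (2 ^ e * m) ^ 2)"
    using Suc by (intro fps_cong_power) simp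
  also have "fps_cong 2 \<dots> (geo (2 * (2 ^ e * m)))"
    using Suc.prems by (intro geo_square_cong) simp
  finally show ?case by (simp add: power_mult[symmetric] mult.commute mult.left_commute)
qed

lemma geo_fourth_power_cong: "m \<ge> 1 \<Longrightarrow> fps_cong 4 (geo m ^ 4) (geo (2 * m) ^ 2)"
proof (rule fps_cong_inverses[where u = "(1 - fps_X ^ m) ^ 4" and v = "(1 - fps_X ^ (2 * m)) ^ 2"])
  assume m: "m \<ge> 1"
  show "fps_cong 4 (geo m ^ 4 * (1 - fps_X ^ m) ^ 4) 1"
    using geo_power_mult_one_minus_X_power[OF m] by (simp add: fps_cong_refl)
  show "fps_cong 4 (geo (2 * m) ^ 2 * (1 - fps_X ^ (2 * m)) ^ 2) 1"
    using geo_power_mult_one_minus_X_power[of "2 * m"] m by (simp add: fps_cong_refl)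
  have diff: "(1 - y) ^ 4 - (1 - y ^ 2) ^ 2 = 4 * (2 * y ^ 2 - y - y ^ 3)" for y :: "int fps"
    by algebra
  have X_power: "(fps_X :: int fps) ^ (2 * m) = (fps_X ^ m) ^ 2"
    by (simp add: power_mult mult.commute)
  show "fps_cong 4 ((1 - fps_X ^ m) ^ 4) ((1 - fps_X ^ (2 * m)) ^ 2)"
    unfolding X_power by (rule fps_cong_if_diff_eq_multiple[OF diff])
qed

definition one_below :: "nat \<Rightarrow> 'a :: semiring_1 fps \<Rightarrow> bool" where
  "one_below m g \<longleftrightarrow> (\<forall>j<m. g $ j = (1 :: 'a fps) $ j)"

lemma coeff_mult_one_below: "one_below m g \<Longrightarrow> j < m \<Longrightarrow> (f * g) $ j = f $ j"
  unfolding fps_mult_nth one_below_def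
  by (subst sum.remove[of _ j]) (auto intro!: sum.neutral)

lemma one_below_power: "one_below m g \<Longrightarrow> one_below m (g ^ e)"
  by (induction e) (auto simp: one_below_def coeff_mult_one_below)

lemma one_below_geo: "one_below m (geo m)"
  unfolding one_below_def geo_def by (auto dest: dvd_imp_le)

lemma pl_gf_nth_stable:
  assumes "j \<le> N" and "N \<le> M"
  shows "pl_gf k M $ j = pl_gf k N $ j"
  using assms(2)
proof (induction M rule: dec_induct)
  case (step M)
  have "pl_gf k (Suc M) = pl_gf k M * geo (Suc M) ^ min k (Suc M)"
    unfolding pl_gf_def by simp
  moreover have "one_below (Suc M) (geo (Suc M) ^ min k (Suc M))"
    by (intro one_below_power one_below_geo)
  ultimately show ?case
    using step assms(1) by (simp add: coeff_mult_one_below)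
qed simp

lemma pl_eq_pl_gf_nth: "j \<le> N \<Longrightarrow> pl k (int j) = pl_gf k N $ j"
  using pl_gf_nth_stable[of j j N k] by (simp add: pl_def)

definition pl_poly :: "nat \<Rightarrow> int poly" where
  "pl_poly k = (\<Prod>m\<in>{1..<k}. (1 - monom 1 m) ^ (k - m))"

definition geo_prod :: "nat \<Rightarrow> nat \<Rightarrow> int fps" where
  "geo_prod k N = (\<Prod>m\<in>{1..N}. geo m ^ k)"

lemma pl_gf_eq_pl_poly_mult: "k \<le> Suc N \<Longrightarrow> pl_gf k N = fps_of_poly (pl_poly k) * geo_prod k N"
proof -
  assume k: "k \<le> Suc N"
  have "fps_of_poly (pl_poly k) = (\<Prod>m\<in>{1..<k}. (1 - fps_X ^ m) ^ (k - m))"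
    unfolding pl_poly_def
    by (simp add: fps_of_poly_prod fps_of_poly_power fps_of_poly_diff fps_of_poly_monom')
  also have "\<dots> = (\<Prod>m\<in>{1..N}. if m < k then (1 - fps_X ^ m) ^ (k - m) else 1)"
    by (rule prod.mono_neutral_cong_left) (use k in auto)
  finally have "fps_of_poly (pl_poly k) * geo_prod k N
      = (\<Prod>m\<in>{1..N}. (if m < k then (1 - fps_X ^ m) ^ (k - m) else 1) * geo m ^ k)"
    unfolding geo_prod_def prod.distrib by simp
  also have "\<dots> = pl_gf k N" unfolding pl_gf_def
  proof (rule prod.cong)
    fix m assume m: "m \<in> {1..N}"
    show "(if m < k then (1 - fps_X ^ m) ^ (k - m) else 1) * geo m ^ k = geo m ^ min k m"
    proof (cases "m < k")
      case True
      have "geo m ^ k = geo m ^ (k - m) * geo m ^ m"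
        using True by (simp add: power_add[symmetric])
      then have "(1 - fps_X ^ m) ^ (k - m) * geo m ^ k
          = (geo m ^ (k - m) * (1 - fps_X ^ m) ^ (k - m)) * geo m ^ m"
        by (simp add: algebra_simps)
      also have "\<dots> = geo m ^ m"
        using geo_power_mult_one_minus_X_power[of m "k - m"] m by simp
      finally show ?thesis using True by simp
    qed simp
  qed simp
  finally show ?thesis by simp
qed

lemma coeff_by_enumerate_coeffs:
  assumes "list_all (\<lambda>(i, c). P i c) (List.enumerate 0 (coeffs p))" and "\<And>i. P i 0"
  shows "P i (coeff p i)"
proof (cases "i < length (coeffs p)")
  case True
  then have "(i, coeffs p ! i) \<in> set (List.enumerate 0 (coeffs p))"
    by (simp add: in_set_enumerate_eq)
  with assms(1) True show ?thesis
    by (auto simp: list_all_iff nth_default_nth simp flip: nth_default_coeffs_eq)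
next
  case False
  then show ?thesis using assms(2) by (simp add: nth_default_beyond flip: nth_default_coeffs_eq)
qed

lemma pl_poly_4: "pl_poly 4 = (1 - monom 1 1) ^ 3 * (1 - monom 1 2) ^ 2 * (1 - monom 1 3)"
  unfolding pl_poly_def by (simp add: eval_nat_numeral atLeastLessThanSuc mult_ac)

lemma pl_poly_8:
  "pl_poly 8 = (1 - monom 1 1) ^ 7 * (1 - monom 1 2) ^ 6 * (1 - monom 1 3) ^ 5
     * (1 - monom 1 4) ^ 4 * (1 - monom 1 5) ^ 3 * (1 - monom 1 6) ^ 2 * (1 - monom 1 7)"
  unfolding pl_poly_def by (simp add: eval_nat_numeral atLeastLessThanSuc mult_ac)

lemma pl_poly_4_cong:
  "fps_cong 4 (fps_of_poly (pl_poly 4)) ((1 + fps_X + fps_X ^ 2) * (1 + fps_X ^ 4) ^ 2)"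
proof -
  define P' :: "int poly" where "P' = (1 + monom 1 1 + monom 1 2) * (1 + monom 1 4) ^ 2"
  have "list_all (\<lambda>(i, c). 4 dvd c) (List.enumerate 0 (coeffs (pl_poly 4 - P')))"
    unfolding pl_poly_4 P'_def by code_simp
  then have "4 dvd coeff (pl_poly 4 - P') i" for i
    by (rule coeff_by_enumerate_coeffs) simp
  then have "fps_cong 4 (fps_of_poly (pl_poly 4)) (fps_of_poly P')"
    by (simp add: fps_cong_def cong_iff_dvd_diff)
  moreover have "fps_of_poly P' = (1 + fps_X + fps_X ^ 2) * (1 + fps_X ^ 4) ^ 2"
    unfolding P'_def
    by (simp add: fps_of_poly_mult fps_of_poly_add fps_of_poly_power fps_of_poly_monom')
  ultimately show ?thesis by simp
qed

lemma pl_poly_8_coeff_even: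
  assumes "i mod 8 \<ge> 5"
  shows "even (coeff (pl_poly 8) i)"
proof -
  have "list_all (\<lambda>(i, c). i mod 8 < 5 \<or> even c) (List.enumerate 0 (coeffs (pl_poly 8)))"
    unfolding pl_poly_8 by code_simp
  then have "i mod 8 < 5 \<or> even (coeff (pl_poly 8) i)"
    by (rule coeff_by_enumerate_coeffs[where P = "\<lambda>i c. i mod 8 < 5 \<or> even c"]) simp
  then show ?thesis using assms by simp
qed

lemma geo_prod_cong_two_pow:
  "fps_cong 2 (geo_prod (2 ^ e) N) (\<Prod>m\<in>{1..N}. geo (2 ^ e * m))"
  unfolding geo_prod_def by (intro fps_cong_prod geo_power_two_pow_cong) simp

lemma pl_gf_8_coeff_even:
  assumes "r \<in> {5, 6, 7}"
  shows "even (pl_gf 8 (8 * j + 7) $ (8 * j + r))"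
proof -
  have "[(fps_of_poly (pl_poly 8) * geo_prod (2 ^ 3) (8 * j + 7)) $ (8 * j + r) = 0] (mod 2)"
  proof (rule coeff_mult_cong_0_if_supported[OF geo_prod_cong_two_pow])
    show "supported_on_multiples (2 ^ 3) (\<Prod>m\<in>{1..8 * j + 7}. geo (2 ^ 3 * m))"
      by (intro supported_on_multiples_prod supported_on_multiples_geo)
    fix i assume "[i = 8 * j + r] (mod 2 ^ 3)"
    then have "i mod 8 = r" using assms by (auto simp: cong_def)
    then show "[fps_of_poly (pl_poly 8) $ i = 0] (mod 2)"
      using assms pl_poly_8_coeff_even by (auto simp: cong_0_iff)
  qed
  then show ?thesis by (simp add: pl_gf_eq_pl_poly_mult cong_0_iff)
qed

lemma coeff_mult_1_plus_X_plus_X_square: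
  "((1 + fps_X + fps_X ^ 2) * f) $ i
     = f $ i + (if i = 0 then 0 else f $ (i - 1)) + (if i < 2 then 0 else f $ (i - 2))"
proof -
  have "(1 + fps_X + fps_X ^ 2) * f = f + fps_X * f + fps_X ^ 2 * f"
    by (simp add: algebra_simps)
  then show ?thesis by (simp add: fps_X_power_mult_nth)
qed

definition pl_gf_4_cofactor :: "nat \<Rightarrow> int fps" where
  "pl_gf_4_cofactor N = (1 + fps_X ^ 4) ^ 2 * geo_prod 4 N"

lemma pl_gf_4_cong_cofactor:
  "3 \<le> N \<Longrightarrow> fps_cong 4 (pl_gf 4 N) ((1 + fps_X + fps_X ^ 2) * pl_gf_4_cofactor N)"
  using fps_cong_mult[OF pl_poly_4_cong fps_cong_refl, of "geo_prod 4 N"]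
  by (simp add: pl_gf_eq_pl_poly_mult pl_gf_4_cofactor_def mult_ac)

lemma pl_gf_4_cofactor_coeff_odd: "odd i \<Longrightarrow> [pl_gf_4_cofactor N $ i = 0] (mod 4)"
  unfolding pl_gf_4_cofactor_def
proof (rule coeff_mult_cong_0_if_supported)
  show "fps_cong 4 (geo_prod 4 N) (\<Prod>m\<in>{1..N}. geo (2 * m) ^ 2)"
    unfolding geo_prod_def by (intro fps_cong_prod geo_fourth_power_cong) simp
  show "supported_on_multiples 2 (\<Prod>m\<in>{1..N}. geo (2 * m) ^ 2)"
    by (intro supported_on_multiples_prod supported_on_multiples_power supported_on_multiples_geo)
  fix j assume "odd i" and "[j = i] (mod 2)"
  then have "\<not> 4 dvd j" unfolding cong_def by presburger
  then show "[((1 + fps_X ^ 4) ^ 2) $ j = 0] (mod 4 :: int)"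
    using supported_on_multiples_power[OF supported_on_multiples_1_plus_X_power[where 'a = int]]
    by (simp add: supported_on_multiples_def)
qed

lemma pl_gf_4_cofactor_coeff_even: "i mod 4 = 2 \<Longrightarrow> even (pl_gf_4_cofactor N $ i)"
proof -
  assume i: "i mod 4 = 2"
  have "[((1 + fps_X ^ 4) ^ 2 * geo_prod 4 N) $ i = 0] (mod 2)"
  proof (rule coeff_mult_cong_0_if_supported)
    show "fps_cong 2 (geo_prod 4 N) (\<Prod>m\<in>{1..N}. geo (4 * m))"
      using geo_prod_cong_two_pow[of 2] by simp
    show "supported_on_multiples 4 (\<Prod>m\<in>{1..N}. geo (4 * m))"
      by (intro supported_on_multiples_prod supported_on_multiples_geo)
    fix j assume "[j = i] (mod 4)"
    then have "\<not> 4 dvd j" using i unfolding cong_def by presburger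
    then show "[((1 + fps_X ^ 4) ^ 2) $ j = 0] (mod 2 :: int)"
      using supported_on_multiples_power[OF supported_on_multiples_1_plus_X_power[where 'a = int]]
      by (simp add: supported_on_multiples_def)
  qed
  then show ?thesis by (simp add: pl_gf_4_cofactor_def cong_0_iff)
qed

lemma pl_gf_4_coeffs_cong:
  fixes j :: nat
  defines "G \<equiv> pl_gf 4 (4 * j + 3)" and "W \<equiv> pl_gf_4_cofactor (4 * j + 3)"
  shows "[G $ (4 * j + 1) = G $ (4 * j + 2) + G $ (4 * j + 3)] (mod 4)"
    and "even (G $ (4 * j + 3))"
proof -
  have G: "[G $ i = W $ i + (if i = 0 then 0 else W $ (i - 1))
      + (if i < 2 then 0 else W $ (i - 2))] (mod 4)" for i
    using pl_gf_4_cong_cofactor[of "4 * j + 3"]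
    unfolding G_def W_def fps_cong_def coeff_mult_1_plus_X_plus_X_square by simp
  have W_odd: "[W $ i = 0] (mod 4)" if "odd i" for i
    using that pl_gf_4_cofactor_coeff_odd unfolding W_def by blast
  have W_2: "even (W $ (4 * j + 2))"
    unfolding W_def by (rule pl_gf_4_cofactor_coeff_even) presburger
  have W_prev: "[(if 4 * j + 1 < 2 then 0 else W $ (4 * j + 1 - 2)) = 0] (mod 4)"
    using W_odd[of "4 * j - 1"] by auto
  have G_1: "[G $ (4 * j + 1) = W $ (4 * j)] (mod 4)"
    using G[of "4 * j + 1"] W_odd[of "4 * j + 1"] W_prev
    unfolding cong_iff_dvd_diff by simp presburger
  have G_2: "[G $ (4 * j + 2) = W $ (4 * j + 2) + W $ (4 * j)] (mod 4)"
    using G[of "4 * j + 2"] W_odd[of "4 * j + 1"]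
    unfolding cong_iff_dvd_diff by simp presburger
  have G_3: "[G $ (4 * j + 3) = W $ (4 * j + 2)] (mod 4)"
    using G[of "4 * j + 3"] W_odd[of "4 * j + 3"] W_odd[of "4 * j + 1"]
    unfolding cong_iff_dvd_diff by (simp add: numeral_eq_Suc) presburger
  show "[G $ (4 * j + 1) = G $ (4 * j + 2) + G $ (4 * j + 3)] (mod 4)"
    using G_1 G_2 G_3 W_2 unfolding cong_iff_dvd_diff by presburger
  show "even (G $ (4 * j + 3))"
    using G_3 W_2 unfolding cong_iff_dvd_diff by presburger
qed

theorem theorem3:
  fixes n :: int
  assumes "n \<ge> 0"
  shows "[pl 4 (4*n+1) = pl 4 (4*n+2) + pl 4 (4*n+3)] (mod 4) \<and>
         [pl 4 (4*n+3) = 0] (mod 2) \<and>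
         [pl 8 (8*n+5) = 0] (mod 2) \<and>
         [pl 8 (8*n+6) = 0] (mod 2) \<and>
         [pl 8 (8*n+7) = 0] (mod 2)"
proof -
  obtain j where n: "n = int j" using assms nonneg_int_cases by blast
  have pl_4: "pl 4 (4 * n + int r) = pl_gf 4 (4 * j + 3) $ (4 * j + r)" if "r \<le> 3" for r
    using that pl_eq_pl_gf_nth[of "4 * j + r" "4 * j + 3" 4] by (simp add: n)
  have pl_8: "pl 8 (8 * n + int r) = pl_gf 8 (8 * j + 7) $ (8 * j + r)" if "r \<le> 7" for r
    using that pl_eq_pl_gf_nth[of "8 * j + r" "8 * j + 7" 8] by (simp add: n)
  show ?thesis
    using pl_4[of 1] pl_4[of 2] pl_4[of 3] pl_8[of 5] pl_8[of 6] pl_8[of 7]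
      pl_gf_4_coeffs_cong[of j] pl_gf_8_coeff_even[of _ j]
    by (simp add: cong_0_iff)
qed

end
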